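(* Let $\mathcal H\subseteq\mathcal S_+^d$ be a well-structured preconditioner set and let $f:\mathbb R^d\to\mathbb R$ be twice continuously differentiable with $\Lambda_{\mathcal H}(f)<\infty$. Then $$L_{\|\cdot\|_{\mathcal H}}(f)\le\Lambda_{\mathcal H}(f)\le d\cdot L_{\|\cdot\|_{\mathcal H}}(f).$$
   Context: $\mathcal S^d_+$ (resp. $\mathcal S^d_{++}$) denotes the set of real symmetric positive semidefinite (resp. positive definite) $d\times d$ matrices. A set $\mathcal H\subseteq\mathcal S_+^d$ is a well-structured preconditioner set if $\mathcal H=\mathcal S_+^d\cap\mathcal K$ for some set $\mathcal K$ of real $d\times d$ matrices that is closed under scalar multiplication, matrix addition and matrix multiplication and contains the identity $I_d$. For $H\in\mathcal S_+^d$, $\|x\|_H=\sqrt{x^\top Hx}$. The $\mathcal H$-norm is $\|x\|_{\mathcal H}:=\sup_{H\in\mathcal H,\operatorname{Tr}(H)\le 1}\|x\|_H$, and $\|y\|_{\mathcal H,*}:=\sup_{\|x\|_{\mathcal H}\le 1}\langle x,y\rangle$ is its dual norm. For a norm $\|\cdot\|$ with dual norm $\|\cdot\|_*$, $L_{\|\cdot\|}(f)$ is the smallest $L\ge0$ such that $\|\nabla f(x)-\nabla f(y)\|_*\le L\|x-y\|$ for all $x,y$. The adaptive smoothness is $\Lambda_{\mathcal H}(f):=\inf\{\operatorname{Tr}(H): H\in\mathcal H,\ -H\preceq\nabla^2 f(x)\preceq H\ \text{for all }x\in\mathbb R^d\}$. *)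

theory Defs
  imports "HOL-Analysis.Analysis"
begin

definition psd :: "real^'n^'n \<Rightarrow> bool" where
  "psd M \<longleftrightarrow> transpose M = M \<and> (\<forall>x. 0 \<le> x \<bullet> (M *v x))"

definition well_structured :: "(real^'n^'n) set \<Rightarrow> bool" where
  "well_structured H \<longleftrightarrow>
     (\<exists>K :: (real^'n^'n) set.
        (\<forall>c A. A \<in> K \<longrightarrow> c *\<^sub>R A \<in> K) \<and>
        (\<forall>A B. A \<in> K \<longrightarrow> B \<in> K \<longrightarrow> A + B \<in> K) \<and>
        (\<forall>A B. A \<in> K \<longrightarrow> B \<in> K \<longrightarrow> A ** B \<in> K) \<and>
        mat 1 \<in> K \<and>
        H = {M. psd M} \<inter> K)"

definition mat_norm :: "real^'n^'n \<Rightarrow> real^'n \<Rightarrow> real" where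
  "mat_norm M x = sqrt (x \<bullet> (M *v x))"

definition H_norm :: "(real^'n^'n) set \<Rightarrow> real^'n \<Rightarrow> real" where
  "H_norm H x = Sup {mat_norm M x | M. M \<in> H \<and> trace M \<le> 1}"

definition dual_norm :: "(real^'n \<Rightarrow> real) \<Rightarrow> real^'n \<Rightarrow> real" where
  "dual_norm N y = Sup {x \<bullet> y | x. N x \<le> 1}"

text \<open>Smoothness constant L_N(f) of f w.r.t. a norm N, given the gradient g of f;
  it is the least L \<ge> 0 (possibly infinite) with the Lipschitz bound.\<close>
definition smoothness :: "(real^'n \<Rightarrow> real) \<Rightarrow> (real^'n \<Rightarrow> real^'n) \<Rightarrow> ereal" where
  "smoothness N g = Inf {ereal L | L. 0 \<le> L \<and>
      (\<forall>x y. dual_norm N (g x - g y) \<le> L * N (x - y))}"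

text \<open>Adaptive smoothness Lambda_H(f), given the Hessian Hf of f
  (Loewner order: A \<preceq> B iff B - A is PSD).\<close>
definition adaptive_smoothness ::
    "(real^'n^'n) set \<Rightarrow> (real^'n \<Rightarrow> real^'n^'n) \<Rightarrow> ereal" where
  "adaptive_smoothness H Hf = Inf {ereal (trace M) | M. M \<in> H \<and>
      (\<forall>x. psd (M - Hf x) \<and> psd (Hf x + M))}"

end

(*
  For M in H the rescaled matrix M / tr M lies in the trace-one slice of H, so
  x' M x <= tr M * |x|_H^2.  If -M <= Hess f <= M everywhere, the mean value theorem writes
  <u, grad f x - grad f y> as <u, A v> with v = x - y and -M <= A <= M; adding the two
  nonnegative forms (s u + v)'(M - A)(s u + v) and (s u - v)'(A + M)(s u - v) gives
  2 s <u, A v> <= s^2 u' M u + v' M v, and s = |v|_H yields <u, A v> <= tr M * |v|_H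
  whenever |u|_H <= 1.  So tr M is a Lipschitz constant of grad f.
  Conversely |.|_H <= |.|_2, so an L-Lipschitz gradient has |v' Hess f v| <= L |v|^2,
  i.e. -L I <= Hess f <= L I, and L I lies in H with trace d L.
*)
theory Submission
  imports Defs
begin

definition abs_loewner_le :: "real^'n^'n \<Rightarrow> real^'n^'n \<Rightarrow> bool" where
  "abs_loewner_le A M \<longleftrightarrow> psd (M - A) \<and> psd (A + M)"

definition gradient_lipschitz ::
    "(real^'n \<Rightarrow> real) \<Rightarrow> (real^'n \<Rightarrow> real^'n) \<Rightarrow> real \<Rightarrow> bool" where
  "gradient_lipschitz N g L \<longleftrightarrow> 0 \<le> L \<and> (\<forall>x y. dual_norm N (g x - g y) \<le> L * N (x - y))"

lemma smoothness_eq: "smoothness N g = Inf {ereal L | L. gradient_lipschitz N g L}"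
  unfolding smoothness_def gradient_lipschitz_def ..

lemma adaptive_smoothness_eq:
  "adaptive_smoothness H Hf = Inf {ereal (trace M) | M. M \<in> H \<and> (\<forall>x. abs_loewner_le (Hf x) M)}"
  unfolding adaptive_smoothness_def abs_loewner_le_def ..

section \<open>Positive semidefinite matrices\<close>

lemma transpose_diff: "transpose (A - B) = transpose A - (transpose B :: real^'n^'n)"
  by (simp add: transpose_def vec_eq_iff)

lemma transpose_add: "transpose (A + B) = transpose A + (transpose B :: real^'n^'n)"
  by (simp add: transpose_def vec_eq_iff)

lemma symmetric_inner_matrix_commute:
  fixes M :: "real^'n^'n"
  assumes "transpose M = M"
  shows "x \<bullet> (M *v y) = y \<bullet> (M *v x)"
  by (metis assms dot_lmul_matrix inner_commute transpose_matrix_vector)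

lemma psd_symmetric: "psd M \<Longrightarrow> transpose M = M"
  unfolding psd_def by blast

lemma psd_quadratic_nonneg: "psd M \<Longrightarrow> 0 \<le> x \<bullet> (M *v x)"
  unfolding psd_def by blast

lemma psd_scaleR: "psd M \<Longrightarrow> 0 \<le> c \<Longrightarrow> psd (c *\<^sub>R M)"
  unfolding psd_def by (auto simp: transpose_scalar scaleR_matrix_vector_assoc[symmetric])

lemma psd_mat_1: "psd (mat 1)"
  unfolding psd_def by simp

lemma quadratic_nonneg_imp_discriminant_le:
  fixes a b c :: real
  assumes nonneg: "\<And>t. 0 \<le> a + 2 * b * t + c * t\<^sup>2" and "0 \<le> c"
  shows "b\<^sup>2 \<le> a * c"
proof (cases "c = 0")
  case True
  have "b = 0"
  proof (rule ccontr)
    assume "b \<noteq> 0"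
    then have "a + 2 * b * (- (a + 1) / (2 * b)) + c * (- (a + 1) / (2 * b))\<^sup>2 = -1"
      using True by (simp add: field_simps)
    then show False using nonneg by (metis neg_0_le_iff_le not_one_le_zero)
  qed
  then show ?thesis using True by simp
next
  case False
  with \<open>0 \<le> c\<close> have c: "0 < c" by simp
  have "0 \<le> a + 2 * b * (- b / c) + c * (- b / c)\<^sup>2" by (rule nonneg)
  also have "\<dots> = a - b\<^sup>2 / c" using c by (simp add: field_simps power2_eq_square)
  finally show ?thesis using c by (simp add: field_simps)
qed

lemma psd_cauchy_schwarz:
  fixes M :: "real^'n^'n"
  assumes "psd M"
  shows "(y \<bullet> (M *v x))\<^sup>2 \<le> (y \<bullet> (M *v y)) * (x \<bullet> (M *v x))"
proof (rule quadratic_nonneg_imp_discriminant_le)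
  fix t :: real
  have "0 \<le> (y + t *\<^sub>R x) \<bullet> (M *v (y + t *\<^sub>R x))" by (rule psd_quadratic_nonneg[OF assms])
  also have "\<dots> = y \<bullet> (M *v y) + 2 * (y \<bullet> (M *v x)) * t + (x \<bullet> (M *v x)) * t\<^sup>2"
    using symmetric_inner_matrix_commute[OF psd_symmetric[OF assms], of x y]
    by (simp add: matrix_vector_right_distrib matrix_vector_mult_scaleR inner_add_left
        inner_add_right power2_eq_square algebra_simps)
  finally show "0 \<le> y \<bullet> (M *v y) + 2 * (y \<bullet> (M *v x)) * t + (x \<bullet> (M *v x)) * t\<^sup>2" .
qed (rule psd_quadratic_nonneg[OF assms])

lemma inner_axis_left: "axis i 1 \<bullet> (v::real^'n) = v $ i"
  by (simp add: cart_eq_inner_axis inner_commute)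

lemma matrix_vector_axis_diag: "((M::real^'n^'n) *v axis i 1) $ i = M $ i $ i"
  by (simp add: matrix_vector_mult_def axis_def if_distrib cong: if_cong)

lemma psd_diag_nonneg: "psd (M::real^'n^'n) \<Longrightarrow> 0 \<le> M $ i $ i"
  using psd_quadratic_nonneg[of M "axis i 1"] by (simp add: inner_axis_left matrix_vector_axis_diag)

lemma psd_trace_nonneg: "psd (M::real^'n^'n) \<Longrightarrow> 0 \<le> trace M"
  unfolding trace_def by (simp add: psd_diag_nonneg sum_nonneg)

lemma trace_scaleR: "trace (c *\<^sub>R (M::real^'n^'n)) = c * trace M"
  unfolding trace_def by (simp add: sum_distrib_left)

lemma psd_matrix_vector_component_le:
  assumes "psd (M::real^'n^'n)"
  shows "\<bar>(M *v x) $ i\<bar> \<le> sqrt (M $ i $ i) * sqrt (x \<bullet> (M *v x))"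
proof -
  have "((M *v x) $ i)\<^sup>2 \<le> M $ i $ i * (x \<bullet> (M *v x))"
    using psd_cauchy_schwarz[OF assms, of "axis i 1" x]
    by (simp add: inner_axis_left matrix_vector_axis_diag)
  then show ?thesis by (metis real_sqrt_abs real_sqrt_le_mono real_sqrt_mult)
qed

lemma psd_quadratic_le_trace:
  assumes "psd (M::real^'n^'n)"
  shows "x \<bullet> (M *v x) \<le> trace M * (norm x)\<^sup>2"
proof -
  define q where "q = x \<bullet> (M *v x)"
  have q0: "0 \<le> q" unfolding q_def by (rule psd_quadratic_nonneg[OF assms])
  define a :: "real^'n" where "a = (\<chi> i. \<bar>x $ i\<bar>)"
  define b :: "real^'n" where "b = (\<chi> i. sqrt (M $ i $ i))"
  have "q = (\<Sum>i\<in>UNIV. x $ i * (M *v x) $ i)" unfolding q_def inner_vec_def by simp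
  also have "\<dots> \<le> (\<Sum>i\<in>UNIV. \<bar>x $ i\<bar> * (sqrt (M $ i $ i) * sqrt q))"
  proof (rule sum_mono)
    fix i
    have "x $ i * (M *v x) $ i \<le> \<bar>x $ i\<bar> * \<bar>(M *v x) $ i\<bar>"
      by (metis abs_ge_self abs_mult)
    also have "\<dots> \<le> \<bar>x $ i\<bar> * (sqrt (M $ i $ i) * sqrt q)"
      using psd_matrix_vector_component_le[OF assms] unfolding q_def by (simp add: mult_left_mono)
    finally show "x $ i * (M *v x) $ i \<le> \<bar>x $ i\<bar> * (sqrt (M $ i $ i) * sqrt q)" .
  qed
  also have "\<dots> = (a \<bullet> b) * sqrt q"
    unfolding a_def b_def inner_vec_def by (simp add: sum_distrib_right mult.assoc)
  also have "\<dots> \<le> norm a * norm b * sqrt q"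
    using norm_cauchy_schwarz[of a b] q0 by (simp add: mult_right_mono)
  also have "norm a = norm x"
    unfolding norm_eq_sqrt_inner a_def inner_vec_def by (simp add: power2_eq_square[symmetric])
  also have "norm b = sqrt (trace M)"
    unfolding norm_eq_sqrt_inner b_def inner_vec_def trace_def using psd_diag_nonneg[OF assms] by simp
  finally have le: "sqrt q * sqrt q \<le> (norm x * sqrt (trace M)) * sqrt q" using q0 by simp
  have "sqrt q \<le> norm x * sqrt (trace M)"
  proof (cases "q = 0")
    case False
    then have "0 < sqrt q" using q0 by simp
    with le show ?thesis by (metis mult_le_cancel_right_pos)
  qed (simp add: psd_trace_nonneg[OF assms])
  then have "(sqrt q)\<^sup>2 \<le> (norm x * sqrt (trace M))\<^sup>2"
    by (rule power_mono) (simp add: q0)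
  then show ?thesis
    using q0 psd_trace_nonneg[OF assms] by (simp add: q_def power_mult_distrib mult.commute)
qed

lemma abs_loewner_le_symmetric:
  assumes "abs_loewner_le A M"
  shows "transpose A = (A::real^'n^'n)"
proof -
  have "transpose (M - A) = M - A" "transpose (A + M) = A + M"
    using assms psd_symmetric unfolding abs_loewner_le_def by blast+
  then have "M $ j $ i - A $ j $ i = M $ i $ j - A $ i $ j"
    and "A $ j $ i + M $ j $ i = A $ i $ j + M $ i $ j" for i j
    by (simp_all add: vec_eq_iff transpose_def)
  then have "A $ j $ i = A $ i $ j" for i j by (smt (verit))
  then show ?thesis by (simp add: vec_eq_iff transpose_def)
qed

lemma abs_loewner_le_bilinear:
  fixes A M :: "real^'n^'n"
  assumes "abs_loewner_le A M"
  shows "2 * s * (u \<bullet> (A *v v)) \<le> s\<^sup>2 * (u \<bullet> (M *v u)) + v \<bullet> (M *v v)"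
proof -
  have lower: "psd (M - A)" and upper: "psd (A + M)" using assms unfolding abs_loewner_le_def by auto
  have "transpose M = M"
    using psd_symmetric[OF lower] abs_loewner_le_symmetric[OF assms] by (simp add: transpose_diff)
  then have symm: "u \<bullet> (A *v v) = v \<bullet> (A *v u)" "u \<bullet> (M *v v) = v \<bullet> (M *v u)"
    using symmetric_inner_matrix_commute abs_loewner_le_symmetric[OF assms] by blast+
  have "0 \<le> (s *\<^sub>R u + v) \<bullet> ((M - A) *v (s *\<^sub>R u + v)) + (s *\<^sub>R u - v) \<bullet> ((A + M) *v (s *\<^sub>R u - v))"
    using psd_quadratic_nonneg[OF lower] psd_quadratic_nonneg[OF upper] by (rule add_nonneg_nonneg)
  also have "\<dots> = 2 * (s\<^sup>2 * (u \<bullet> (M *v u)) + v \<bullet> (M *v v) - 2 * s * (u \<bullet> (A *v v)))"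
    using symm
    by (simp add: matrix_vector_mult_diff_rdistrib matrix_vector_mult_add_rdistrib
        matrix_vector_right_distrib matrix_vector_mult_diff_distrib matrix_vector_mult_scaleR
        inner_add_left inner_add_right inner_diff_left inner_diff_right power2_eq_square algebra_simps)
  finally show ?thesis by simp
qed

lemma abs_loewner_le_scaled_identity:
  fixes A :: "real^'n^'n"
  assumes symm: "transpose A = A" and bound: "\<And>v. \<bar>v \<bullet> (A *v v)\<bar> \<le> c * (v \<bullet> v)"
  shows "abs_loewner_le A (c *\<^sub>R mat 1)"
proof -
  have "0 \<le> v \<bullet> ((c *\<^sub>R mat 1 - A) *v v)" "0 \<le> v \<bullet> ((A + c *\<^sub>R mat 1) *v v)" for v
    using bound[of v]
    by (simp_all add: matrix_vector_mult_diff_rdistrib matrix_vector_mult_add_rdistrib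
        scaleR_matrix_vector_assoc[symmetric] inner_diff_right inner_add_right abs_le_iff)
  with symm show ?thesis
    unfolding abs_loewner_le_def psd_def by (simp add: transpose_diff transpose_add transpose_scalar)
qed

section \<open>The \<open>\<H>\<close>-norm\<close>

lemma well_structured_psd: "well_structured H \<Longrightarrow> M \<in> H \<Longrightarrow> psd M"
  unfolding well_structured_def by auto

lemma well_structured_scaleR:
  "well_structured H \<Longrightarrow> M \<in> H \<Longrightarrow> 0 \<le> c \<Longrightarrow> c *\<^sub>R M \<in> H"
  unfolding well_structured_def using psd_scaleR by blast

lemma well_structured_scaled_identity:
  "well_structured (H::(real^'n^'n) set) \<Longrightarrow> 0 \<le> c \<Longrightarrow> c *\<^sub>R mat 1 \<in> H"
  unfolding well_structured_def using psd_scaleR[OF psd_mat_1] by blast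

lemma mat_norm_le_norm:
  assumes "psd M" and "trace M \<le> 1"
  shows "mat_norm M x \<le> norm x"
proof -
  have "x \<bullet> (M *v x) \<le> trace M * (norm x)\<^sup>2" by (rule psd_quadratic_le_trace[OF assms(1)])
  also have "\<dots> \<le> (norm x)\<^sup>2" using assms(2) by (simp add: mult_left_le_one_le psd_trace_nonneg[OF assms(1)])
  finally show ?thesis unfolding mat_norm_def using real_le_lsqrt by simp
qed

lemma mat_norm_le_H_norm:
  assumes "well_structured H" "M \<in> H" "trace M \<le> 1"
  shows "mat_norm M x \<le> H_norm H x"
  unfolding H_norm_def
proof (rule cSup_upper)
  show "bdd_above {mat_norm M x | M. M \<in> H \<and> trace M \<le> 1}"
    using mat_norm_le_norm well_structured_psd[OF assms(1)] unfolding bdd_above_def by blast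
qed (use assms in blast)

lemma H_norm_le_norm:
  assumes "well_structured (H::(real^'n^'n) set)"
  shows "H_norm H x \<le> norm x"
  unfolding H_norm_def
proof (rule cSup_least)
  have "0 \<in> H" using well_structured_scaled_identity[OF assms, of 0] by simp
  moreover have "trace (0::real^'n^'n) \<le> 1" by (simp add: trace_def)
  ultimately show "{mat_norm M x | M. M \<in> H \<and> trace M \<le> 1} \<noteq> {}" by blast
qed (use mat_norm_le_norm well_structured_psd[OF assms] in blast)

lemma norm_le_sqrt_card_H_norm:
  assumes "well_structured (H::(real^'n^'n) set)"
  shows "norm x \<le> sqrt CARD('n) * H_norm H x"
proof -
  let ?I = "(1 / CARD('n)) *\<^sub>R (mat 1 :: real^'n^'n)"
  have "norm x / sqrt CARD('n) = mat_norm ?I x"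
    unfolding mat_norm_def norm_eq_sqrt_inner
    by (simp add: scaleR_matrix_vector_assoc[symmetric] real_sqrt_divide)
  also have "\<dots> \<le> H_norm H x"
    by (rule mat_norm_le_H_norm[OF assms well_structured_scaled_identity[OF assms]])
      (simp_all add: trace_scaleR trace_I)
  finally show ?thesis by (simp add: field_simps)
qed

lemma H_norm_nonneg:
  assumes "well_structured (H::(real^'n^'n) set)"
  shows "0 \<le> H_norm H x"
proof -
  have "0 \<le> sqrt CARD('n) * H_norm H x"
    using norm_le_sqrt_card_H_norm[OF assms, of x] norm_ge_zero[of x] by linarith
  then show ?thesis by (simp add: zero_le_mult_iff)
qed

lemma quadratic_le_trace_H_norm:
  assumes H: "well_structured H" and M: "M \<in> H"
  shows "x \<bullet> (M *v x) \<le> trace M * (H_norm H x)\<^sup>2"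
proof (cases "trace M = 0")
  case True
  then show ?thesis using psd_quadratic_le_trace[OF well_structured_psd[OF H M], of x] by simp
next
  case False
  then have tr: "0 < trace M" using psd_trace_nonneg[OF well_structured_psd[OF H M]] by simp
  let ?M = "(1 / trace M) *\<^sub>R M"
  have "psd ?M" using psd_scaleR[OF well_structured_psd[OF H M]] tr by simp
  have "mat_norm ?M x \<le> H_norm H x"
    using tr by (intro mat_norm_le_H_norm[OF H well_structured_scaleR[OF H M]]) (simp_all add: trace_scaleR)
  then have "(mat_norm ?M x)\<^sup>2 \<le> (H_norm H x)\<^sup>2"
    by (rule power_mono) (simp add: mat_norm_def psd_quadratic_nonneg[OF \<open>psd ?M\<close>])
  moreover have "(mat_norm ?M x)\<^sup>2 = x \<bullet> (M *v x) / trace M"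
    unfolding mat_norm_def using psd_quadratic_nonneg[OF well_structured_psd[OF H M], of x] tr
    by (simp add: scaleR_matrix_vector_assoc[symmetric])
  ultimately show ?thesis using tr by (simp add: field_simps)
qed

section \<open>Dual norms\<close>

lemma inner_le_dual_norm:
  assumes bounded: "\<And>x. N x \<le> 1 \<Longrightarrow> norm x \<le> R" and "N u \<le> 1"
  shows "u \<bullet> y \<le> dual_norm N y"
  unfolding dual_norm_def
proof (rule cSup_upper)
  have "x \<bullet> y \<le> R * norm y" if "N x \<le> 1" for x
    using norm_cauchy_schwarz[of x y] bounded[OF that] by (meson mult_right_mono norm_ge_zero order_trans)
  then show "bdd_above {x \<bullet> y | x. N x \<le> 1}" unfolding bdd_above_def by blast
qed (use assms in blast)

lemma dual_norm_le:
  assumes "N 0 \<le> 1" and "\<And>u. N u \<le> 1 \<Longrightarrow> u \<bullet> y \<le> B"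
  shows "dual_norm N y \<le> B"
  unfolding dual_norm_def using assms by (intro cSup_least) auto

lemma inner_le_dual_H_norm:
  assumes "well_structured (H::(real^'n^'n) set)" and "H_norm H u \<le> 1"
  shows "u \<bullet> y \<le> dual_norm (H_norm H) y"
proof (rule inner_le_dual_norm)
  show "norm x \<le> sqrt CARD('n)" if "H_norm H x \<le> 1" for x
    using norm_le_sqrt_card_H_norm[OF assms(1), of x] that by (simp add: mult_left_le order_trans)
qed (rule assms(2))

section \<open>Hessian bounds and gradient Lipschitz constants\<close>

lemma has_real_derivative_inner_along_line:
  fixes g :: "real^'n \<Rightarrow> real^'n" and Hf :: "real^'n \<Rightarrow> real^'n^'n"
  assumes g: "\<And>x. (g has_derivative (\<lambda>h. Hf x *v h)) (at x)"
  shows "((\<lambda>t. u \<bullet> g (y + t *\<^sub>R v)) has_real_derivative u \<bullet> (Hf (y + t *\<^sub>R v) *v v)) (at t)"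
proof -
  have "((\<lambda>t. y + t *\<^sub>R v) has_derivative (\<lambda>h. h *\<^sub>R v)) (at t)"
    by (auto intro!: derivative_eq_intros)
  from has_derivative_compose[OF this g]
  have "((\<lambda>t. u \<bullet> g (y + t *\<^sub>R v)) has_derivative (\<lambda>h. u \<bullet> (Hf (y + t *\<^sub>R v) *v (h *\<^sub>R v)))) (at t)"
    by (rule has_derivative_inner_right)
  then show ?thesis
    unfolding has_field_derivative_def
    by (rule has_derivative_eq_rhs) (simp add: matrix_vector_mult_scaleR fun_eq_iff mult.commute)
qed

lemma inner_diff_mean_value:
  fixes g :: "real^'n \<Rightarrow> real^'n" and Hf :: "real^'n \<Rightarrow> real^'n^'n"
  assumes g: "\<And>x. (g has_derivative (\<lambda>h. Hf x *v h)) (at x)"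
  obtains z where "u \<bullet> (g x - g y) = u \<bullet> (Hf z *v (x - y))"
proof -
  obtain t where "u \<bullet> g (y + 1 *\<^sub>R (x - y)) - u \<bullet> g (y + 0 *\<^sub>R (x - y))
      = (1 - 0) * (u \<bullet> (Hf (y + t *\<^sub>R (x - y)) *v (x - y)))"
    using MVT2[of 0 1 "\<lambda>t. u \<bullet> g (y + t *\<^sub>R (x - y))"] has_real_derivative_inner_along_line[OF g]
    by force
  then show ?thesis by (intro that) (simp add: inner_diff_right)
qed

lemma inner_le_trace_H_norm:
  fixes H :: "(real^'n^'n) set"
  assumes H: "well_structured H" and M: "M \<in> H" and "abs_loewner_le A M"
    and u: "H_norm H u \<le> 1"
  shows "u \<bullet> (A *v v) \<le> trace M * H_norm H v"
proof (cases "v = 0")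
  case True
  then show ?thesis
    using psd_trace_nonneg[OF well_structured_psd[OF H M]] H_norm_nonneg[OF H] by simp
next
  case False
  define s where "s = H_norm H v"
  have "0 < norm v" using False by simp
  also have "norm v \<le> sqrt CARD('n) * s" unfolding s_def by (rule norm_le_sqrt_card_H_norm[OF H])
  finally have s: "0 < s" by (simp add: zero_less_mult_iff)
  have "(H_norm H u)\<^sup>2 \<le> 1" using u H_norm_nonneg[OF H] by (simp add: power_le_one)
  then have "u \<bullet> (M *v u) \<le> trace M"
    using quadratic_le_trace_H_norm[OF H M, of u] psd_trace_nonneg[OF well_structured_psd[OF H M]]
    by (meson mult_left_le order_trans)
  then have "2 * s * (u \<bullet> (A *v v)) \<le> s\<^sup>2 * trace M + trace M * s\<^sup>2"
    using abs_loewner_le_bilinear[OF assms(3), of s u v] quadratic_le_trace_H_norm[OF H M, of v]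
    unfolding s_def[symmetric] by (smt (verit) mult_left_mono zero_le_power2)
  then show ?thesis using s unfolding s_def[symmetric] by (simp add: power2_eq_square mult.commute)
qed

lemma gradient_lipschitz_trace:
  assumes H: "well_structured H" and M: "M \<in> H" and dominated: "\<And>z. abs_loewner_le (Hf z) M"
    and g: "\<And>x. (g has_derivative (\<lambda>h. Hf x *v h)) (at x)"
  shows "gradient_lipschitz (H_norm H) g (trace M)"
  unfolding gradient_lipschitz_def
proof (intro conjI allI)
  show "0 \<le> trace M" by (rule psd_trace_nonneg[OF well_structured_psd[OF H M]])
  fix x y
  show "dual_norm (H_norm H) (g x - g y) \<le> trace M * H_norm H (x - y)"
  proof (rule dual_norm_le)
    show "H_norm H 0 \<le> 1" using H_norm_le_norm[OF H, of 0] by simp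
    fix u assume "H_norm H u \<le> 1"
    obtain z where "u \<bullet> (g x - g y) = u \<bullet> (Hf z *v (x - y))" by (rule inner_diff_mean_value[OF g])
    also have "\<dots> \<le> trace M * H_norm H (x - y)"
      by (rule inner_le_trace_H_norm[OF H M dominated \<open>H_norm H u \<le> 1\<close>])
    finally show "u \<bullet> (g x - g y) \<le> trace M * H_norm H (x - y)" .
  qed
qed

lemma real_derivative_le_of_increment_le:
  fixes \<phi> :: "real \<Rightarrow> real"
  assumes der: "(\<phi> has_real_derivative d) (at 0)" and incr: "\<And>h. 0 < h \<Longrightarrow> \<phi> h - \<phi> 0 \<le> C * h"
  shows "d \<le> C"
proof (rule ccontr)
  assume "\<not> d \<le> C"
  then have pos: "0 < d - C" by simp
  have "((\<lambda>h. \<phi> h - C * h) has_real_derivative d - C) (at 0)"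
    by (auto intro!: derivative_eq_intros der)
  from DERIV_pos_inc_right[OF this pos]
  obtain \<delta> where "0 < \<delta>" and "\<forall>h>0. h < \<delta> \<longrightarrow> \<phi> 0 < \<phi> h - C * h"
    by auto
  moreover from \<open>0 < \<delta>\<close> have "0 < \<delta> / 2" "\<delta> / 2 < \<delta>" by simp_all
  ultimately have "\<phi> 0 < \<phi> (\<delta> / 2) - C * (\<delta> / 2)" by blast
  then show False using incr[of "\<delta> / 2"] \<open>0 < \<delta>\<close> by simp
qed

lemma inner_hessian_le_of_gradient_lipschitz:
  assumes H: "well_structured H" and lip: "gradient_lipschitz (H_norm H) g L"
    and g: "\<And>x. (g has_derivative (\<lambda>h. Hf x *v h)) (at x)"
    and u: "H_norm H u \<le> 1"
  shows "u \<bullet> (Hf x *v v) \<le> L * norm v"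
proof (rule real_derivative_le_of_increment_le)
  show "((\<lambda>t. u \<bullet> g (x + t *\<^sub>R v)) has_real_derivative u \<bullet> (Hf x *v v)) (at 0)"
    using has_real_derivative_inner_along_line[OF g, of u x v 0] by simp
  fix h :: real assume "0 < h"
  have "u \<bullet> g (x + h *\<^sub>R v) - u \<bullet> g (x + 0 *\<^sub>R v) = u \<bullet> (g (x + h *\<^sub>R v) - g x)"
    by (simp add: inner_diff_right)
  also have "\<dots> \<le> dual_norm (H_norm H) (g (x + h *\<^sub>R v) - g x)" by (rule inner_le_dual_H_norm[OF H u])
  also have "\<dots> \<le> L * H_norm H (h *\<^sub>R v)"
    using lip unfolding gradient_lipschitz_def by (metis add_diff_cancel_left')
  also have "\<dots> \<le> L * norm (h *\<^sub>R v)"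
    using lip H_norm_le_norm[OF H, of "h *\<^sub>R v"] unfolding gradient_lipschitz_def
    by (intro mult_left_mono) auto
  also have "\<dots> = L * norm v * h" using \<open>0 < h\<close> by simp
  finally show "u \<bullet> g (x + h *\<^sub>R v) - u \<bullet> g (x + 0 *\<^sub>R v) \<le> L * norm v * h" .
qed

lemma abs_quadratic_hessian_le_of_gradient_lipschitz:
  assumes H: "well_structured H" and lip: "gradient_lipschitz (H_norm H) g L"
    and g: "\<And>x. (g has_derivative (\<lambda>h. Hf x *v h)) (at x)"
  shows "\<bar>v \<bullet> (Hf x *v v)\<bar> \<le> L * (v \<bullet> v)"
proof (cases "v = 0")
  case False
  have "H_norm H (c *\<^sub>R v) \<le> 1" if "\<bar>c\<bar> = 1 / norm v" for c
    using H_norm_le_norm[OF H, of "c *\<^sub>R v"] that False by simp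
  then have "c * (v \<bullet> (Hf x *v v)) \<le> L * norm v" if "\<bar>c\<bar> = 1 / norm v" for c
    using inner_hessian_le_of_gradient_lipschitz[OF H lip g, of "c *\<^sub>R v" x v] that by simp
  from this[of "1 / norm v"] this[of "- 1 / norm v"] show ?thesis
    using False by (simp add: abs_le_iff field_simps power2_norm_eq_inner[symmetric] power2_eq_square)
qed simp

theorem proposition2p1:
  fixes H :: "(real^'n^'n) set"
    and f :: "real^'n \<Rightarrow> real"
    and g :: "real^'n \<Rightarrow> real^'n"
    and Hf :: "real^'n \<Rightarrow> real^'n^'n"
  assumes "well_structured H"
    and "\<And>x. (f has_derivative (\<lambda>h. g x \<bullet> h)) (at x)"
    and "\<And>x. (g has_derivative (\<lambda>h. Hf x *v h)) (at x)"
    and "continuous_on UNIV Hf"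
    and "adaptive_smoothness H Hf < \<infinity>"
  shows "smoothness (H_norm H) g \<le> adaptive_smoothness H Hf \<and>
         adaptive_smoothness H Hf \<le> ereal (real CARD('n)) * smoothness (H_norm H) g"
proof
  note H = assms(1) and g = assms(3)
  show "smoothness (H_norm H) g \<le> adaptive_smoothness H Hf"
    unfolding smoothness_eq adaptive_smoothness_eq
    by (rule Inf_superset_mono) (blast intro: gradient_lipschitz_trace[OF H _ _ g])
  \<comment> \<open>Finiteness of the adaptive smoothness
    only serves to make every Hf x symmetric, as the Loewner bounds by L I require.\<close>
  have "{ereal (trace M) | M. M \<in> H \<and> (\<forall>x. abs_loewner_le (Hf x) M)} \<noteq> {}"
    using assms(5) unfolding adaptive_smoothness_eq by (intro notI) (simp add: top_ereal_def)
  then obtain M0 where "\<And>x. abs_loewner_le (Hf x) M0" by blast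
  then have symm: "transpose (Hf x) = Hf x" for x by (rule abs_loewner_le_symmetric)
  have "adaptive_smoothness H Hf
      \<le> Inf {ereal CARD('n) * r | r. \<exists>L. r = ereal L \<and> gradient_lipschitz (H_norm H) g L}"
    unfolding adaptive_smoothness_eq
  proof (rule Inf_superset_mono, safe)
    fix L assume lip: "gradient_lipschitz (H_norm H) g L"
    then have "L *\<^sub>R mat 1 \<in> H"
      using well_structured_scaled_identity[OF H] by (simp add: gradient_lipschitz_def)
    moreover have "abs_loewner_le (Hf x) (L *\<^sub>R mat 1)" for x
      using abs_quadratic_hessian_le_of_gradient_lipschitz[OF H lip g]
      by (rule abs_loewner_le_scaled_identity[OF symm])
    ultimately show "\<exists>M. ereal CARD('n) * ereal L = ereal (trace M) \<and> M \<in> H \<and>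
        (\<forall>x. abs_loewner_le (Hf x) M)"
      by (intro exI[of _ "L *\<^sub>R mat 1"]) (simp add: trace_scaleR trace_I)
  qed
  also have "\<dots> = ereal CARD('n) * smoothness (H_norm H) g"
    unfolding smoothness_eq by (rule ereal_Inf_cmult) simp
  finally show "adaptive_smoothness H Hf \<le> ereal CARD('n) * smoothness (H_norm H) g" .
qed

end
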